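(* There is an absolute constant $C>0$ such that for every alphabet $\Sigma$ of size $\sigma\ge 2$, every positive integer $d$, and every string $T$ over $\Sigma$ of length $n>d$, $\mathcal{S}(T,d)\le C\min\{d,\sigma\}\,n$, i.e., $\mathcal{S}(T,d)\in O(\min\{d,\sigma\}n)$. This upper bound is tight when $n-d\in\Omega(n)$: for every constant $\gamma\in(0,1)$ there is a constant $c>0$ such that for all $\sigma\ge 2$ and all $d<n$ with $n-d\ge\gamma n$ there exists a string $T$ of length $n$ over an alphabet of size $\sigma$ with $\mathcal{S}(T,d)\ge c\min\{d,\sigma\}\,n$.
   Context: For a string $S$ over alphabet $\Sigma$, a string $w\in\Sigma^*$ is a minimal absent word (MAW) of $S$ if $w$ does not occur in $S$ but every proper substring of $w$ (including the empty string) occurs in $S$; $\mathsf{MAW}(S)$ is the set of all MAWs of $S$. $T[a..b]$ denotes the substring of $T$ from position $a$ to $b$. For a string $T$ of length $n>d$, $\mathcal{S}(T,d)=\sum_{i=1}^{n-d}|\mathsf{MAW}(T[i..i+d-1])\bigtriangleup\mathsf{MAW}(T[i+1..i+d])|$, where $\bigtriangleup$ is symmetric difference. *)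

theory Defs
  imports Complex_Main "HOL-Library.Sublist"
begin

(* Strings are lists; an alphabet is a finite set of symbols (w.l.o.g. naturals).
   "w occurs in S" is the contiguous-substring relation 'sublist' (HOL-Library.Sublist). *)

definition MAW :: "'a set \<Rightarrow> 'a list \<Rightarrow> 'a list set" where
  "MAW \<Sigma> S = {w \<in> lists \<Sigma>. \<not> sublist w S \<and>
                   (\<forall>v. sublist v w \<and> v \<noteq> w \<longrightarrow> sublist v S)}"

definition symdiff :: "'a set \<Rightarrow> 'a set \<Rightarrow> 'a set" where
  "symdiff A B = (A - B) \<union> (B - A)"

(* window T i d = T[i+1 .. i+d] in 1-based notation *)
definition window :: "'a list \<Rightarrow> nat \<Rightarrow> nat \<Rightarrow> 'a list" where
  "window T i d = take d (drop i T)"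

(* S(T,d) = sum_{i=1}^{n-d} |MAW(T[i..i+d-1]) \<triangle> MAW(T[i+1..i+d])|, reindexed from 0 *)
definition Ssum :: "'a set \<Rightarrow> 'a list \<Rightarrow> nat \<Rightarrow> nat" where
  "Ssum \<Sigma> T d = (\<Sum>i<length T - d.
      card (symdiff (MAW \<Sigma> (window T i d)) (MAW \<Sigma> (window T (Suc i) d))))"

end

theory Submission
  imports Defs
begin

(* Sliding the window from W = a X to W' = X b, every MAW that changes does so when the first
   letter a is deleted or when the last letter b is appended, and by reversal the second case
   mirrors the first. Deleting the first letter of S creates at most one MAW (a prefix of S
   absent from tl S) and destroys only MAWs w for which tl w or butlast w is a prefix of S
   occurring nowhere else in S. Those of the first kind are x u for one fixed u and letters x of
   S, hence at most min(d, sigma) many. Those of the second kind are at most d per window, and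
   over all windows such a w is determined, up to one exception per window, by the position
   where it ends in T and by its last letter; so there are at most n (sigma + 1) of them in
   total.

   For the lower bound, the string 0101... changes a MAW at every step, which suffices when
   min(d, sigma) is small. Otherwise let s = sigma - 1 and T = 0^L c_0 0^L c_1 ... with
   L = d div s and c_j = 1 + j mod s. In a window 0^r c V the separator c is unique, so for each
   of the about min(s, d / (L + 1)) >= min(d, sigma) / 4 separators x occurring in V, the word
   x 0^r c is a MAW of the window that disappears once its first letter is cut off. *)

section \<open>Factors of lists\<close>

lemma sublist_iff_take_drop:
  "sublist v xs \<longleftrightarrow> (\<exists>q. q + length v \<le> length xs \<and> v = take (length v) (drop q xs))"
proof
  assume "sublist v xs"
  then obtain p s where "xs = p @ v @ s" by (auto simp: sublist_def)
  then show "\<exists>q. q + length v \<le> length xs \<and> v = take (length v) (drop q xs)"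
    by (intro exI[of _ "length p"]) simp
next
  assume "\<exists>q. q + length v \<le> length xs \<and> v = take (length v) (drop q xs)"
  then show "sublist v xs"
    by (metis sublist_drop sublist_take sublist_order.order_trans)
qed

lemma sublist_iff_nth:
  "sublist v xs \<longleftrightarrow>
    (\<exists>q. q + length v \<le> length xs \<and> (\<forall>j<length v. v ! j = xs ! (q + j)))"
proof -
  have "v = take (length v) (drop q xs) \<longleftrightarrow> (\<forall>j<length v. v ! j = xs ! (q + j))"
    if "q + length v \<le> length xs" for q
    using that by (auto simp: list_eq_iff_nth_eq)
  then show ?thesis
    unfolding sublist_iff_take_drop by blast
qed

lemma strict_sublist_butlast_or_tl:
  assumes "sublist v w" "v \<noteq> w"
  shows "sublist v (butlast w) \<or> sublist v (tl w)"
proof -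
  from assms(1) obtain p s where w: "w = p @ v @ s" by (auto simp: sublist_def)
  show ?thesis
  proof (cases "s = []")
    case False
    then have "butlast w = p @ v @ butlast s" by (simp add: w butlast_append)
    then show ?thesis by auto
  next
    case True
    with assms(2) w have "p \<noteq> []" by auto
    then have "tl w = tl p @ v @ s" by (simp add: w)
    then show ?thesis by auto
  qed
qed

lemma sublist_tl_tl: "sublist v S \<Longrightarrow> sublist (tl v) (tl S)"
proof -
  assume "sublist v S"
  then obtain p s where S: "S = p @ v @ s" by (auto simp: sublist_def)
  show ?thesis
  proof (cases p)
    case Nil
    then show ?thesis using S by (cases v) auto
  next
    case (Cons a p')
    then have "sublist v (tl S)" using S by simp
    then show ?thesis using sublist_tl sublist_order.order_trans by blast
  qed
qed

lemma prefix_if_sublist_not_sublist_tl: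
  "sublist v S \<Longrightarrow> \<not> sublist v (tl S) \<Longrightarrow> prefix v S"
  by (cases S) (auto simp: sublist_Cons_right)

lemma prefix_take_mono: "m \<le> m' \<Longrightarrow> prefix (take m xs) (take m' xs)"
  by (metis min.absorb1 take_is_prefix take_take)

lemma strict_prefix_butlast: "prefix xs ys \<Longrightarrow> xs \<noteq> ys \<Longrightarrow> prefix xs (butlast ys)"
  by (metis append_butlast_last_id prefix_snoc prefix_Nil)

lemma not_sublist_snoc:
  assumes "\<forall>k. r \<le> k \<and> k < length ys \<longrightarrow> ys ! k \<noteq> c" and "r \<le> length u"
  shows "\<not> sublist (u @ [c]) ys"
proof
  assume "sublist (u @ [c]) ys"
  then obtain q where "q + Suc (length u) \<le> length ys" "(u @ [c]) ! length u = ys ! (q + length u)"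
    unfolding sublist_iff_nth by fastforce
  then show False
    using assms(1)[rule_format, of "q + length u"] assms(2) by auto
qed

lemma upt_split_at: "i \<le> p \<Longrightarrow> p < k \<Longrightarrow> [i..<k] = [i..<p] @ p # [Suc p..<k]"
  by (metis le_add_diff_inverse less_imp_le_nat upt_add_eq_append upt_conv_Cons)

lemma sublist_map_upt:
  assumes "c \<le> a" "a \<le> b" "b \<le> e"
  shows "sublist (map f [a..<b]) (map f [c..<e])"
proof -
  have "map f [a..<b] = take (b - a) (drop (a - c) (map f [c..<e]))"
    using assms by (simp add: drop_map take_map)
  then show ?thesis by (metis sublist_drop sublist_take sublist_order.order_trans)
qed

section \<open>Minimal absent words of a string and of its tail\<close>

lemma MAW_iff:
  "w \<in> MAW \<Sigma> S \<longleftrightarrow>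
     w \<in> lists \<Sigma> \<and> \<not> sublist w S \<and> sublist (butlast w) S \<and> sublist (tl w) S"
proof
  assume w: "w \<in> MAW \<Sigma> S"
  then have "w \<noteq> []" by (auto simp: MAW_def)
  then have "length (butlast w) \<noteq> length w" "length (tl w) \<noteq> length w" by (cases w; simp)+
  then have "butlast w \<noteq> w" "tl w \<noteq> w" by metis+
  with w show "w \<in> lists \<Sigma> \<and> \<not> sublist w S \<and> sublist (butlast w) S \<and> sublist (tl w) S"
    by (auto simp: MAW_def)
next
  assume "w \<in> lists \<Sigma> \<and> \<not> sublist w S \<and> sublist (butlast w) S \<and> sublist (tl w) S"
  then show "w \<in> MAW \<Sigma> S"
    unfolding MAW_def
    by (blast dest: strict_sublist_butlast_or_tl intro: sublist_order.order_trans)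
qed

lemma MAW_prefix_eq:
  assumes "w \<in> MAW \<Sigma> S" "w' \<in> MAW \<Sigma> S" "prefix w w'"
  shows "w = w'"
  using assms by (auto simp: MAW_def)

lemma MAW_tl_not_prefix_tl:
  assumes "w \<in> MAW \<Sigma> S" "S \<noteq> []" "hd w = hd S"
  shows "\<not> prefix (tl w) (tl S)"
proof
  assume "prefix (tl w) (tl S)"
  moreover have "w \<noteq> []"
    using assms(1) by (auto simp: MAW_def)
  ultimately have "prefix w S"
    using assms(2,3) by (metis Cons_prefix_Cons list.collapse)
  then show False
    using assms(1) by (simp add: MAW_iff)
qed

lemma finite_MAW:
  assumes "finite \<Sigma>"
  shows "finite (MAW \<Sigma> S)"
proof -
  have "length w \<le> Suc (length S)" if "w \<in> MAW \<Sigma> S" for w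
    using that sublist_length_le[of "butlast w" S] by (auto simp: MAW_iff)
  then have "MAW \<Sigma> S \<subseteq> {w. set w \<subseteq> \<Sigma> \<and> length w \<le> Suc (length S)}"
    by (auto simp: MAW_def)
  then show ?thesis
    using finite_lists_length_le[OF assms] finite_subset by blast
qed

lemma MAW_rev: "MAW \<Sigma> (rev S) = rev ` MAW \<Sigma> S"
proof -
  have "tl (rev w) = rev (butlast w)" for w :: "'a list"
    by (metis butlast_rev rev_rev_ident)
  then have rev_mem: "rev w \<in> MAW \<Sigma> (rev S) \<longleftrightarrow> w \<in> MAW \<Sigma> S" for w
    by (simp add: MAW_iff in_lists_conv_set) blast
  show ?thesis
  proof (rule set_eqI)
    show "w \<in> MAW \<Sigma> (rev S) \<longleftrightarrow> w \<in> rev ` MAW \<Sigma> S" for w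
      using rev_mem[of "rev w"] by (metis image_iff rev_rev_ident)
  qed
qed

lemma MAW_Cons_take_eq:
  assumes "w \<in> MAW \<Sigma> S" "w' \<in> MAW \<Sigma> S"
    and "w = x # take (length w - 1) D" "w' = x # take (length w' - 1) D"
  shows "w = w'"
proof -
  have "prefix u u'"
    if "u = x # take (length u - 1) D" "u' = x # take (length u' - 1) D" "length u \<le> length u'"
    for u u'
  proof -
    have "prefix (take (length u - 1) D) (take (length u' - 1) D)"
      using that(3) by (intro prefix_take_mono) simp
    then show ?thesis
      using that(1,2) by (metis Cons_prefix_Cons)
  qed
  then have "prefix w w' \<or> prefix w' w"
    using assms(3,4) nat_le_linear[of "length w" "length w'"] by blast
  then show ?thesis
    using MAW_prefix_eq[OF assms(1,2)] MAW_prefix_eq[OF assms(2,1)] by auto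
qed

lemma card_MAW_tl_diff_le_1:
  assumes "finite \<Sigma>"
  shows "card (MAW \<Sigma> (tl S) - MAW \<Sigma> S) \<le> 1"
proof -
  have prefix: "prefix w S" if "w \<in> MAW \<Sigma> (tl S) - MAW \<Sigma> S" for w
  proof -
    have "\<And>v. sublist v (tl S) \<Longrightarrow> sublist v S"
      by (meson sublist_order.order_trans sublist_tl)
    with that have "sublist w S" "\<not> sublist w (tl S)"
      by (auto simp: MAW_iff)
    then show ?thesis by (rule prefix_if_sublist_not_sublist_tl)
  qed
  have "w = w'" if "w \<in> MAW \<Sigma> (tl S) - MAW \<Sigma> S" "w' \<in> MAW \<Sigma> (tl S) - MAW \<Sigma> S" for w w'
    using prefix_same_cases[OF prefix[OF that(1)] prefix[OF that(2)]] that MAW_prefix_eq by blast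
  moreover have "finite (MAW \<Sigma> (tl S) - MAW \<Sigma> S)"
    using finite_MAW[OF assms] by simp
  ultimately show ?thesis
    using card_le_Suc0_iff_eq by (metis One_nat_def)
qed

lemma MAW_tl_eq_if_not_sublist_tl:
  assumes "w \<in> MAW \<Sigma> S" "\<not> sublist (tl w) (tl S)"
    and "w' \<in> MAW \<Sigma> S" "\<not> sublist (tl w') (tl S)"
  shows "tl w = tl w'"
proof -
  have prefix: "prefix (tl u) S" if "u \<in> MAW \<Sigma> S" "\<not> sublist (tl u) (tl S)" for u
    using that prefix_if_sublist_not_sublist_tl by (auto simp: MAW_iff)
  have not_strict: "\<not> (prefix (tl u) (tl u') \<and> tl u \<noteq> tl u')"
    if "\<not> sublist (tl u) (tl S)" "u' \<in> MAW \<Sigma> S" for u u'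
  proof
    assume "prefix (tl u) (tl u') \<and> tl u \<noteq> tl u'"
    then have "prefix (tl u) (tl (butlast u'))"
      using strict_prefix_butlast butlast_tl by metis
    moreover have "sublist (tl (butlast u')) (tl S)"
      using that(2) sublist_tl_tl by (auto simp: MAW_iff)
    ultimately show False
      using that(1) prefix_imp_sublist sublist_order.order_trans by blast
  qed
  from prefix_same_cases[OF prefix[OF assms(1,2)] prefix[OF assms(3,4)]]
  show ?thesis
    using not_strict[OF assms(2,3)] not_strict[OF assms(4,1)] by auto
qed

lemma card_MAW_tl_not_sublist_le:
  "card {w \<in> MAW \<Sigma> S. \<not> sublist (tl w) (tl S)} \<le> card (set S)"
proof -
  let ?B = "{w \<in> MAW \<Sigma> S. \<not> sublist (tl w) (tl S)}"
  have hd: "w \<noteq> [] \<and> hd w \<in> set S" if "w \<in> ?B" for w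
  proof -
    have "tl w \<noteq> []" "sublist (butlast w) S"
      using that by (auto simp: MAW_iff)
    then have "w \<noteq> []" "hd w \<in> set (butlast w)"
      by (cases w; simp)+
    then show ?thesis
      using \<open>sublist (butlast w) S\<close> set_mono_sublist by blast
  qed
  show ?thesis
  proof (cases "?B = {}")
    case False
    then obtain w0 where w0: "w0 \<in> ?B" by blast
    have "?B \<subseteq> (\<lambda>x. x # tl w0) ` set S"
    proof
      fix w assume w: "w \<in> ?B"
      have "tl w = tl w0"
        using MAW_tl_eq_if_not_sublist_tl[of w \<Sigma> S w0] w w0 by simp
      then have "w = hd w # tl w0"
        using hd[OF w] list.collapse by metis
      with hd[OF w] show "w \<in> (\<lambda>x. x # tl w0) ` set S"
        by blast
    qed
    then have "card ?B \<le> card ((\<lambda>x. x # tl w0) ` set S)"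
      by (intro card_mono) auto
    also have "\<dots> \<le> card (set S)"
      by (rule card_image_le) simp
    finally show ?thesis .
  next
    case True
    show ?thesis unfolding True by simp
  qed
qed

definition MAW_lost_prefix :: "'a set \<Rightarrow> 'a list \<Rightarrow> 'a list set" where
  "MAW_lost_prefix \<Sigma> S = {w \<in> MAW \<Sigma> S. \<not> sublist (butlast w) (tl S)}"

lemma MAW_lost_prefixD:
  assumes "w \<in> MAW_lost_prefix \<Sigma> S"
  shows "2 \<le> length w" "butlast w = take (length w - 1) S" "hd w = S ! 0"
    "length w \<le> Suc (length S)"
proof -
  have w: "w \<in> MAW \<Sigma> S" "\<not> sublist (butlast w) (tl S)"
    using assms by (auto simp: MAW_lost_prefix_def)
  then have prefix: "prefix (butlast w) S"
    using prefix_if_sublist_not_sublist_tl by (auto simp: MAW_iff)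
  then show butlast: "butlast w = take (length w - 1) S"
    by (metis append_eq_conv_conj length_butlast prefix_def)
  from prefix_length_le[OF prefix] show "length w \<le> Suc (length S)"
    by simp
  have "butlast w \<noteq> []"
    using w(2) by auto
  then show len: "2 \<le> length w"
    by (cases w rule: rev_cases) (auto simp: Suc_le_eq)
  have "hd w = butlast w ! 0"
    using len by (cases w) (auto simp: nth_butlast)
  also have "\<dots> = S ! 0"
    using butlast len by simp
  finally show "hd w = S ! 0" .
qed

lemma card_MAW_lost_prefix_le: "card (MAW_lost_prefix \<Sigma> S) \<le> length S"
proof -
  let ?A = "MAW_lost_prefix \<Sigma> S"
  have "\<forall>w\<in>?A. \<exists>q. q + (length w - 1) \<le> length S \<and> tl w = take (length w - 1) (drop q S)"
  proof
    fix w assume "w \<in> ?A"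
    then have "sublist (tl w) S"
      by (simp add: MAW_lost_prefix_def MAW_iff)
    then show "\<exists>q. q + (length w - 1) \<le> length S \<and> tl w = take (length w - 1) (drop q S)"
      by (simp add: sublist_iff_take_drop)
  qed
  from bchoice[OF this] obtain occ where occ: "\<forall>w\<in>?A.
      occ w + (length w - 1) \<le> length S \<and> tl w = take (length w - 1) (drop (occ w) S)"
    by blast
  have form: "w = S ! 0 # take (length w - 1) (drop (occ w) S)" if "w \<in> ?A" for w
  proof -
    have "w \<noteq> []"
      using MAW_lost_prefixD(1)[OF that] by auto
    then have "w = hd w # tl w" by simp
    also have "\<dots> = S ! 0 # take (length w - 1) (drop (occ w) S)"
      using occ[rule_format, OF that] MAW_lost_prefixD(3)[OF that] by simp
    finally show ?thesis .
  qed
  have "inj_on occ ?A"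
  proof (rule inj_onI)
    fix w w' assume w: "w \<in> ?A" and w': "w' \<in> ?A" and eq: "occ w = occ w'"
    have "w \<in> MAW \<Sigma> S" "w' \<in> MAW \<Sigma> S"
      using w w' by (auto simp: MAW_lost_prefix_def)
    from MAW_Cons_take_eq[OF this form[OF w] form[OF w', folded eq]]
    show "w = w'" .
  qed
  moreover have "occ ` ?A \<subseteq> {..<length S}"
  proof (rule image_subsetI)
    fix w assume "w \<in> ?A"
    then show "occ w \<in> {..<length S}"
      using occ MAW_lost_prefixD(1)[of w] by fastforce
  qed
  ultimately have "card ?A \<le> card {..<length S}"
    by (intro card_inj_on_le) simp_all
  then show ?thesis by simp
qed

lemma card_MAW_diff_tl_le:
  assumes "finite \<Sigma>"
  shows "card (MAW \<Sigma> S - MAW \<Sigma> (tl S)) \<le> card (MAW_lost_prefix \<Sigma> S) + card (set S)"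
proof -
  let ?B = "{w \<in> MAW \<Sigma> S. \<not> sublist (tl w) (tl S)}"
  have "\<not> sublist w (tl S)" if "w \<in> MAW \<Sigma> S" for w
    using that sublist_order.order_trans[OF _ sublist_tl] by (auto simp: MAW_iff)
  then have "MAW \<Sigma> S - MAW \<Sigma> (tl S) \<subseteq> MAW_lost_prefix \<Sigma> S \<union> ?B"
    by (auto simp: MAW_lost_prefix_def MAW_iff)
  then have "card (MAW \<Sigma> S - MAW \<Sigma> (tl S)) \<le> card (MAW_lost_prefix \<Sigma> S \<union> ?B)"
    by (intro card_mono) (auto simp: MAW_lost_prefix_def finite_MAW[OF assms])
  also have "\<dots> \<le> card (MAW_lost_prefix \<Sigma> S) + card ?B"
    by (rule card_Un_le)
  also have "\<dots> \<le> card (MAW_lost_prefix \<Sigma> S) + card (set S)"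
    using card_MAW_tl_not_sublist_le by simp
  finally show ?thesis .
qed

lemma MAW_lost_prefix_eq_if_not_sublist_tl:
  assumes "w \<in> MAW_lost_prefix \<Sigma> S" "\<not> sublist (tl w) (tl S)"
    and "w' \<in> MAW_lost_prefix \<Sigma> S" "\<not> sublist (tl w') (tl S)"
  shows "w = w'"
proof -
  have form: "u = S ! 0 # take (length u - 1) S"
    if "u \<in> MAW_lost_prefix \<Sigma> S" "\<not> sublist (tl u) (tl S)" for u
  proof -
    have "prefix (tl u) S"
      using that prefix_if_sublist_not_sublist_tl by (auto simp: MAW_lost_prefix_def MAW_iff)
    then have "tl u = take (length u - 1) S"
      by (metis append_eq_conv_conj length_tl prefix_def)
    moreover have "u \<noteq> []"
      using MAW_lost_prefixD(1)[OF that(1)] by auto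
    ultimately show ?thesis
      using MAW_lost_prefixD(3)[OF that(1)] list.collapse by metis
  qed
  have "w \<in> MAW \<Sigma> S" "w' \<in> MAW \<Sigma> S"
    using assms(1,3) by (simp_all add: MAW_lost_prefix_def)
  from MAW_Cons_take_eq[OF this form[OF assms(1,2)] form[OF assms(3,4)]]
  show ?thesis .
qed

lemma card_MAW_diff_rev:
  "card (MAW \<Sigma> (rev A) - MAW \<Sigma> (rev B)) = card (MAW \<Sigma> A - MAW \<Sigma> B)"
proof -
  have "inj (rev :: 'a list \<Rightarrow> 'a list)" by (simp add: inj_on_def)
  then show ?thesis
    by (simp add: MAW_rev image_set_diff[symmetric] card_image inj_on_def)
qed

lemma card_symdiff_MAW_le:
  assumes "finite \<Sigma>" and "tl S = butlast S'"
  shows "card (symdiff (MAW \<Sigma> S) (MAW \<Sigma> S'))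
    \<le> card (MAW_lost_prefix \<Sigma> S) + card (MAW_lost_prefix \<Sigma> (rev S'))
       + card (set S) + card (set S') + 2"
proof -
  let ?M = "MAW \<Sigma>" and ?X = "tl S" and ?R = "rev S'"
  have X: "?X = rev (tl ?R)"
    using assms(2) by (metis butlast_rev rev_rev_ident)
  have "symdiff (?M S) (?M S')
      \<subseteq> (?M S - ?M ?X) \<union> (?M ?X - ?M S) \<union> (?M ?X - ?M S') \<union> (?M S' - ?M ?X)"
    by (auto simp: symdiff_def)
  then have "card (symdiff (?M S) (?M S'))
      \<le> card ((?M S - ?M ?X) \<union> (?M ?X - ?M S) \<union> (?M ?X - ?M S') \<union> (?M S' - ?M ?X))"
    by (intro card_mono) (simp_all add: finite_MAW[OF assms(1)])
  also have "\<dots> \<le> card (?M S - ?M ?X) + card (?M ?X - ?M S) + card (?M ?X - ?M S') + card (?M S' - ?M ?X)"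
    using card_Un_le[of "(?M S - ?M ?X) \<union> (?M ?X - ?M S) \<union> (?M ?X - ?M S')" "?M S' - ?M ?X"]
      card_Un_le[of "(?M S - ?M ?X) \<union> (?M ?X - ?M S)" "?M ?X - ?M S'"]
      card_Un_le[of "?M S - ?M ?X" "?M ?X - ?M S"]
    by linarith
  also have "\<dots> = card (?M S - ?M ?X) + card (?M ?X - ?M S)
      + card (?M (tl ?R) - ?M ?R) + card (?M ?R - ?M (tl ?R))"
    using card_MAW_diff_rev[of \<Sigma> "tl ?R" ?R] card_MAW_diff_rev[of \<Sigma> ?R "tl ?R"] X by simp
  also have "\<dots> \<le> (card (MAW_lost_prefix \<Sigma> S) + card (set S)) + 1 + 1
      + (card (MAW_lost_prefix \<Sigma> ?R) + card (set ?R))"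
    using card_MAW_diff_tl_le[OF assms(1), of S] card_MAW_tl_diff_le_1[OF assms(1), of S]
      card_MAW_tl_diff_le_1[OF assms(1), of ?R] card_MAW_diff_tl_le[OF assms(1), of ?R]
    by linarith
  finally show ?thesis by simp
qed

section \<open>The upper bound\<close>

lemma window_nth: "i + d \<le> length T \<Longrightarrow> j < d \<Longrightarrow> window T i d ! j = T ! (i + j)"
  by (simp add: window_def)

lemma length_window: "i + d \<le> length T \<Longrightarrow> length (window T i d) = d"
  by (simp add: window_def)

lemma tl_window: "Suc i + d \<le> length T \<Longrightarrow> tl (window T i d) = butlast (window T (Suc i) d)"
  by (simp add: window_def butlast_take tl_take drop_Suc tl_drop)

lemma rev_window:
  "i + d \<le> length T \<Longrightarrow> rev (window T i d) = window (rev T) (length T - d - i) d"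
  by (simp add: window_def rev_take rev_drop drop_take add.commute[of d i])

lemma window_map_upt: "i + d \<le> n \<Longrightarrow> window (map f [0..<n]) i d = map f [i..<i + d]"
  by (simp add: window_def drop_map take_map)

lemma card_set_window_le:
  assumes "finite \<Sigma>" "set T \<subseteq> \<Sigma>" "i + d \<le> length T"
  shows "card (set (window T i d)) \<le> min d (card \<Sigma>)"
proof -
  have "card (set (window T i d)) \<le> d"
    using card_length[of "window T i d"] length_window[OF assms(3)] by simp
  moreover have "set (window T i d) \<subseteq> \<Sigma>"
    using assms(2) set_take_subset set_drop_subset unfolding window_def by fast
  then have "card (set (window T i d)) \<le> card \<Sigma>"
    by (rule card_mono[OF assms(1)])
  ultimately show ?thesis by simp
qed

(* tl w occurs in tl of its window at some offset q >= 1 (offset 0 would make w a prefix of the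
   window), so every factor of butlast w avoiding its first letter reoccurs q positions further
   right. If w' ended where w ends, butlast w' would be such a factor starting at i', hence it
   would occur in tl of its own window. *)
lemma MAW_lost_prefix_window_end_neq:
  assumes T: "i' + d \<le> length T" and "i < i'"
    and w: "w \<in> MAW_lost_prefix \<Sigma> (window T i d)" "sublist (tl w) (tl (window T i d))"
    and w': "w' \<in> MAW_lost_prefix \<Sigma> (window T i' d)"
  shows "i + length w \<noteq> i' + length w'"
proof
  assume len: "i + length w = i' + length w'"
  let ?W = "window T i d" and ?W' = "window T i' d"
  define m where "m = length w - 1"
  define m' where "m' = length w' - 1"
  have Ti: "i + d \<le> length T"
    using T \<open>i < i'\<close> by simp
  have md: "m \<le> d"
    using MAW_lost_prefixD(4)[OF w(1)] length_window[OF Ti] by (simp add: m_def)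
  have m': "1 \<le> m'" "m' < m"
    using MAW_lost_prefixD(1)[OF w'] len \<open>i < i'\<close> by (simp_all add: m_def m'_def)
  have lo: "w ! x = T ! (i + x)" if "x < m" for x
  proof -
    have "w ! x = butlast w ! x"
      using that by (simp add: nth_butlast m_def)
    then show ?thesis
      using MAW_lost_prefixD(2)[OF w(1)] that md window_nth[OF Ti] by (simp add: m_def)
  qed
  obtain q where q: "q + m \<le> d - 1" "tl w = take m (drop q (tl ?W))"
    using w(2) length_window[OF Ti] unfolding sublist_iff_take_drop by (auto simp: m_def)
  have "q \<noteq> 0"
  proof
    assume "q = 0"
    then have "prefix (tl w) (tl ?W)"
      using q(2) by (simp add: take_is_prefix)
    moreover have "?W \<noteq> []"
      using md m' length_window[OF Ti] by auto
    moreover from this have "hd w = hd ?W"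
      using MAW_lost_prefixD(3)[OF w(1)] by (simp add: hd_conv_nth)
    ultimately show False
      using MAW_tl_not_prefix_tl w(1) by (auto simp: MAW_lost_prefix_def)
  qed
  have hi: "w ! x = T ! (i + q + x)" if "1 \<le> x" "x \<le> m" for x
  proof -
    have "w ! x = tl w ! (x - 1)"
      using that by (simp add: nth_tl m_def)
    then show ?thesis
      using q that window_nth[OF Ti] length_window[OF Ti] by (simp add: nth_tl add.assoc)
  qed
  have "sublist (butlast w') (tl ?W')"
    unfolding sublist_iff_nth
  proof (intro exI conjI allI impI)
    show "q - 1 + length (butlast w') \<le> length (tl ?W')"
      using q(1) m' \<open>q \<noteq> 0\<close> length_window[OF T] by (simp add: m'_def)
  next
    fix l assume "l < length (butlast w')"
    then have l: "l < m'" by (simp add: m'_def)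
    have "butlast w' ! l = T ! (i' + l)"
      using MAW_lost_prefixD(2)[OF w'] l m' md window_nth[OF T] by (simp add: m'_def)
    also have "\<dots> = w ! (i' - i + l)"
      using lo[of "i' - i + l"] l len \<open>i < i'\<close> by (simp add: m_def m'_def)
    also have "\<dots> = T ! (i' + q + l)"
      using hi[of "i' - i + l"] l len \<open>i < i'\<close> by (simp add: m_def m'_def ac_simps)
    also have "\<dots> = tl ?W' ! (q - 1 + l)"
      using window_nth[OF T] length_window[OF T] \<open>q \<noteq> 0\<close> q(1) l m' md
      by (simp add: nth_tl add.assoc)
    finally show "butlast w' ! l = tl ?W' ! (q - 1 + l)" .
  qed
  then show False
    using w' by (simp add: MAW_lost_prefix_def)
qed

lemma MAW_lost_prefix_windows_eq_if_same_end:
  assumes "i + d \<le> length T" "i' + d \<le> length T"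
    and w: "w \<in> MAW_lost_prefix \<Sigma> (window T i d)" "sublist (tl w) (tl (window T i d))"
    and w': "w' \<in> MAW_lost_prefix \<Sigma> (window T i' d)" "sublist (tl w') (tl (window T i' d))"
    and len: "i + length w = i' + length w'" and last: "last w = last w'"
  shows "i = i' \<and> w = w'"
proof -
  have "i = i'"
  proof (rule ccontr)
    assume "i \<noteq> i'"
    then consider "i < i'" | "i' < i" by linarith
    then show False
    proof cases
      case 1
      from MAW_lost_prefix_window_end_neq[OF assms(2) 1 w w'(1)] len
      show False ..
    next
      case 2
      from MAW_lost_prefix_window_end_neq[OF assms(1) 2 w' w(1)] len
      show False by simp
    qed
  qed
  then have "butlast w = butlast w'"
    using len MAW_lost_prefixD(2)[OF w(1)] MAW_lost_prefixD(2)[OF w'(1)] by simp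
  moreover have "w \<noteq> []" "w' \<noteq> []"
    using MAW_lost_prefixD(1)[OF w(1)] MAW_lost_prefixD(1)[OF w'(1)] by auto
  ultimately have "w = w'"
    using last by (metis append_butlast_last_id)
  with \<open>i = i'\<close> show ?thesis ..
qed

lemma sum_card_MAW_lost_prefix_windows_le:
  assumes "finite \<Sigma>" and "N + d \<le> length T"
  shows "(\<Sum>i<N. card (MAW_lost_prefix \<Sigma> (window T i d))) \<le> length T * (card \<Sigma> + 1)"
proof -
  let ?A = "\<lambda>i. MAW_lost_prefix \<Sigma> (window T i d)"
  let ?G = "SIGMA i:{..<N}. ?A i"
  (* A pair (i, w) is determined by i if tl w does not occur in tl of the window, and otherwise
     by the end position of w in T and its last letter. *)
  let ?G1 = "{(i, w) \<in> ?G. \<not> sublist (tl w) (tl (window T i d))}"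
  let ?G2 = "{(i, w) \<in> ?G. sublist (tl w) (tl (window T i d))}"
  have fin: "finite (?A i)" for i
    using finite_MAW[OF assms(1)] by (rule finite_subset[rotated]) (auto simp: MAW_lost_prefix_def)
  have win: "i + d \<le> length T" if "i < N" for i
    using that assms(2) by simp
  have "(\<Sum>i<N. card (?A i)) = card ?G"
    using fin by simp
  also have "\<dots> = card (?G1 \<union> ?G2)"
    by (rule arg_cong[where f = card]) auto
  also have "\<dots> \<le> card ?G1 + card ?G2"
    by (rule card_Un_le)
  also have "card ?G1 \<le> N"
  proof -
    have "inj_on fst ?G1"
    proof (rule inj_onI)
      fix p p' assume "p \<in> ?G1" "p' \<in> ?G1" "fst p = fst p'"
      then show "p = p'"
        using MAW_lost_prefix_eq_if_not_sublist_tl[of "snd p" \<Sigma> "window T (fst p) d" "snd p'"]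
        by (auto simp: prod_eq_iff)
    qed
    then have "card ?G1 \<le> card {..<N}"
      by (intro card_inj_on_le) auto
    then show ?thesis by simp
  qed
  also have "card ?G2 \<le> length T * card \<Sigma>"
  proof -
    define end_letter :: "nat \<times> 'a list \<Rightarrow> nat \<times> 'a"
      where "end_letter = (\<lambda>(i, w). (i + (length w - 1), last w))"
    have "inj_on end_letter ?G2"
    proof (rule inj_onI)
      fix p p' assume "p \<in> ?G2" "p' \<in> ?G2" and eq: "end_letter p = end_letter p'"
      then obtain i w i' w' where p: "p = (i, w)" and p': "p' = (i', w')"
        and w: "w \<in> ?A i" "sublist (tl w) (tl (window T i d))" "i < N"
        and w': "w' \<in> ?A i'" "sublist (tl w') (tl (window T i' d))" "i' < N"
        by (cases p, cases p') auto
      have "i + length w = i' + length w'" "last w = last w'"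
        using eq MAW_lost_prefixD(1)[OF w(1)] MAW_lost_prefixD(1)[OF w'(1)]
        by (auto simp: end_letter_def p p')
      with MAW_lost_prefix_windows_eq_if_same_end[OF win[OF w(3)] win[OF w'(3)] w(1,2) w'(1,2)]
      show "p = p'" by (simp add: p p')
    qed
    moreover have "end_letter ` ?G2 \<subseteq> {..<length T} \<times> \<Sigma>"
    proof (rule image_subsetI)
      fix p assume "p \<in> ?G2"
      then obtain i w where p: "p = (i, w)" and w: "w \<in> ?A i" "i < N"
        by auto
      then have "w \<in> lists \<Sigma>" "w \<noteq> []"
        by (auto simp: MAW_lost_prefix_def MAW_iff)
      moreover have "i + (length w - 1) < length T"
        using MAW_lost_prefixD(4)[OF w(1)] length_window[OF win[OF w(2)]] assms(2) w(2) by simp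
      ultimately show "end_letter p \<in> {..<length T} \<times> \<Sigma>"
        by (auto simp: end_letter_def p)
    qed
    ultimately have "card ?G2 \<le> card ({..<length T} \<times> \<Sigma>)"
      using assms(1) by (intro card_inj_on_le) auto
    then show ?thesis
      by (simp add: card_cartesian_product)
  qed
  finally show ?thesis
    using assms(2) by (simp add: algebra_simps)
qed

lemma sum_card_MAW_lost_prefix_windows_le_min:
  assumes "finite \<Sigma>" and "N + d \<le> length T"
  shows "(\<Sum>i<N. card (MAW_lost_prefix \<Sigma> (window T i d))) \<le> length T * min d (card \<Sigma> + 1)"
proof -
  have "card (MAW_lost_prefix \<Sigma> (window T i d)) \<le> d" if "i < N" for i
    using card_MAW_lost_prefix_le[of \<Sigma> "window T i d"] length_window[of i d T] that assms(2)
    by simp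
  then have "(\<Sum>i<N. card (MAW_lost_prefix \<Sigma> (window T i d))) \<le> (\<Sum>i<N. d)"
    by (intro sum_mono) simp
  also have "\<dots> \<le> length T * d"
    using assms(2) by simp
  finally show ?thesis
    using sum_card_MAW_lost_prefix_windows_le[OF assms] by (simp add: min_def)
qed

theorem Ssum_le:
  assumes "finite \<Sigma>" "set T \<subseteq> \<Sigma>" "0 < d" "d < length T"
  shows "Ssum \<Sigma> T d \<le> 8 * min d (card \<Sigma>) * length T"
proof -
  define n where "n = length T"
  define N where "N = n - d"
  define m where "m = min d (card \<Sigma>)"
  define lost where "lost T' i = card (MAW_lost_prefix \<Sigma> (window T' i d))" for T' i
  have "0 < card \<Sigma>"
    using assms(1,2,4) by (cases T) (auto simp: card_gt_0_iff)
  then have "1 \<le> m"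
    using assms(3) by (simp add: m_def)
  have set_le: "card (set (window T j d)) \<le> m" if "j + d \<le> length T" for j
    using card_set_window_le[OF assms(1,2) that] by (simp add: m_def)
  have step: "card (symdiff (MAW \<Sigma> (window T i d)) (MAW \<Sigma> (window T (Suc i) d)))
      \<le> lost T i + lost (rev T) (N - Suc i) + (2 * m + 2)" if "i < N" for i
  proof -
    have i: "Suc i + d \<le> length T"
      using that by (simp add: N_def n_def)
    have "rev (window T (Suc i) d) = window (rev T) (N - Suc i) d"
      using rev_window[OF i] by (simp add: N_def n_def)
    moreover have "i + d \<le> length T"
      using i by simp
    ultimately show ?thesis
      using card_symdiff_MAW_le[OF assms(1) tl_window[OF i]] set_le[of i] set_le[OF i]
      by (simp add: lost_def)
  qed
  have "Ssum \<Sigma> T d \<le> (\<Sum>i<N. lost T i + lost (rev T) (N - Suc i) + (2 * m + 2))"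
    unfolding Ssum_def N_def n_def using step by (intro sum_mono) (simp add: N_def n_def)
  also have "\<dots> = (\<Sum>i<N. lost T i) + (\<Sum>i<N. lost (rev T) i) + N * (2 * m + 2)"
    using sum.nat_diff_reindex[of "lost (rev T)" N] unfolding sum.distrib by simp
  also have "\<dots> \<le> n * min d (card \<Sigma> + 1) + n * min d (card \<Sigma> + 1) + n * (2 * m + 2)"
    using sum_card_MAW_lost_prefix_windows_le_min[OF assms(1), of N d T]
      sum_card_MAW_lost_prefix_windows_le_min[OF assms(1), of N d "rev T"] assms(4)
    by (intro add_mono mult_le_mono1) (simp_all add: lost_def N_def n_def)
  also have "\<dots> \<le> n * (2 * m) + n * (2 * m) + n * (4 * m)"
    using \<open>1 \<le> m\<close> by (intro add_mono mult_le_mono2) (auto simp: m_def)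
  finally show ?thesis
    by (simp add: m_def n_def algebra_simps)
qed

section \<open>The lower bound\<close>

lemma Ssum_ge_if_steps_ge:
  assumes "\<And>i. Suc i + d \<le> length T \<Longrightarrow>
    k \<le> card (symdiff (MAW \<Sigma> (window T i d)) (MAW \<Sigma> (window T (Suc i) d)))"
  shows "(length T - d) * k \<le> Ssum \<Sigma> T d"
proof -
  have "(length T - d) * k = (\<Sum>i<length T - d. k)"
    by simp
  also have "\<dots> \<le> Ssum \<Sigma> T d"
    unfolding Ssum_def using assms by (intro sum_mono) auto
  finally show ?thesis .
qed

lemma card_le_card_symdiff:
  "finite A \<Longrightarrow> finite B \<Longrightarrow> K \<subseteq> A - B \<Longrightarrow> card K \<le> card (symdiff A B)"
  by (intro card_mono) (auto simp: symdiff_def)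

lemma card_symdiff_MAW_alternating:
  fixes \<sigma> d i n :: nat
  defines "T \<equiv> map (\<lambda>p. p mod 2) [0..<n]"
  assumes "2 \<le> \<sigma>" "0 < d" "Suc i + d \<le> n"
  shows "1 \<le> card (symdiff (MAW {0..<\<sigma>} (window T i d)) (MAW {0..<\<sigma>} (window T (Suc i) d)))"
proof -
  let ?f = "\<lambda>p::nat. p mod 2"
  let ?W = "map ?f [i..<i + d]" and ?W' = "map ?f [Suc i..<Suc i + d]"
  have "?W' \<in> MAW {0..<\<sigma>} ?W"
    unfolding MAW_iff
  proof (intro conjI)
    show "?W' \<in> lists {0..<\<sigma>}"
      using assms(2) by auto
    show "\<not> sublist ?W' ?W"
    proof
      assume "sublist ?W' ?W"
      then have "?W' = ?W"
        by (rule subseq_same_length[OF sublist_imp_subseq]) simp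
      then have "?W' ! 0 = ?W ! 0" by simp
      then show False
        using assms(3) by (simp del: upt_Suc) presburger
    qed
    show "sublist (butlast ?W') ?W"
      by (simp add: map_butlast[symmetric] sublist_map_upt)
    have "tl ?W' = map ?f [Suc (Suc i)..<Suc (Suc (i + d - 1))]"
      using assms(3) by (simp add: map_tl[symmetric] del: upt_Suc)
    also have "\<dots> = map ?f [i..<i + d - 1]"
      by (simp only: map_Suc_upt[symmetric] map_map) (simp add: comp_def)
    finally show "sublist (tl ?W') ?W"
      using sublist_map_upt[of i i "i + d - 1" "i + d" ?f] assms(3) by (simp del: upt_Suc)
  qed
  moreover have "?W' \<notin> MAW {0..<\<sigma>} ?W'"
    by (simp add: MAW_iff)
  ultimately have "{?W'} \<subseteq> MAW {0..<\<sigma>} ?W - MAW {0..<\<sigma>} ?W'"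
    by simp
  from card_le_card_symdiff[OF finite_MAW finite_MAW this] show ?thesis
    using assms(4) by (simp add: T_def window_map_upt)
qed

lemma MAW_diff_witness:
  assumes S: "S = replicate r z @ c # V" and "c \<notin> set V" "c \<noteq> b"
    and "x \<in> \<Sigma>" "z \<in> \<Sigma>" "c \<in> \<Sigma>" and "sublist (x # replicate r z) V"
  shows "x # replicate r z @ [c] \<in> MAW \<Sigma> S - MAW \<Sigma> (tl S @ [b])"
proof -
  have late: "S ! k \<noteq> c" if "Suc r \<le> k" "k < length S" for k
    using that assms(2) S by (auto simp: nth_append dest: nth_mem)
  have late': "(tl S @ [b]) ! k \<noteq> c" if "r \<le> k" "k < length (tl S @ [b])" for k
    using that late[of "Suc k"] assms(3) by (cases "k < length S - 1") (auto simp: nth_append nth_tl)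
  have "x # replicate r z @ [c] \<in> MAW \<Sigma> S"
    unfolding MAW_iff
  proof (intro conjI)
    show "x # replicate r z @ [c] \<in> lists \<Sigma>"
      using assms(4-6) by auto
    show "\<not> sublist (x # replicate r z @ [c]) S"
      using not_sublist_snoc[of "Suc r" S c "x # replicate r z"] late by auto
    show "sublist (butlast (x # replicate r z @ [c])) S"
    proof -
      have "sublist V S"
        using S by (metis append.assoc append_Cons append_Nil sublist_append_leftI)
      with assms(7) show ?thesis
        by (simp add: butlast_append sublist_order.order_trans)
    qed
    show "sublist (tl (x # replicate r z @ [c])) S"
      using S by (metis append.assoc append_Cons append_Nil list.sel(3) sublist_append_rightI)
  qed
  moreover have "\<not> sublist (replicate r z @ [c]) (tl S @ [b])"
    using not_sublist_snoc[of r "tl S @ [b]" c "replicate r z"] late' by auto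
  then have "x # replicate r z @ [c] \<notin> MAW \<Sigma> (tl S @ [b])"
    by (simp add: MAW_iff)
  ultimately show ?thesis by simp
qed

lemma mod_neq_if_less_add:
  fixes a j s :: nat
  assumes "j < a" "a < j + s"
  shows "a mod s \<noteq> j mod s"
proof
  assume "a mod s = j mod s"
  then have "s dvd a - j"
    using mod_eq_dvd_iff_nat[of j a s] assms(1) by simp
  moreover have "0 < a - j" "a - j < s"
    using assms by auto
  ultimately show False
    using dvd_imp_le by fastforce
qed

(* Position p of the string 0^L c_0 0^L c_1 0^L c_2 ... with separators c_j = Suc (j mod s). *)
definition block_letter :: "nat \<Rightarrow> nat \<Rightarrow> nat \<Rightarrow> nat" where
  "block_letter s L p = (if p mod Suc L < L then 0 else Suc (p div Suc L mod s))"

lemma block_letter_at: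
  assumes "x \<le> L"
  shows "block_letter s L (j * Suc L + x) = (if x < L then 0 else Suc (j mod s))"
proof -
  have "(j * P + x) mod P = x" "(j * P + x) div P = j" if "x < P" for P :: nat
    using that by auto
  from this[of "Suc L"] assms show ?thesis
    unfolding block_letter_def by (simp only: less_Suc_eq_le)
qed

lemma block_letter_less: "0 < s \<Longrightarrow> block_letter s L p < Suc s"
  by (simp add: block_letter_def)

lemma block_letter_sep_unique:
  assumes "0 < s" "j * Suc L + L < p" "p < (j + s) * Suc L + L"
  shows "block_letter s L p \<noteq> Suc (j mod s)"
proof
  assume sep: "block_letter s L p = Suc (j mod s)"
  define a where "a = p div Suc L"
  have "\<not> p mod Suc L < L"
    using sep by (auto simp: block_letter_def split: if_splits)
  moreover have "p mod Suc L < Suc L" by simp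
  ultimately have "p mod Suc L = L" by linarith
  then have p: "p = a * Suc L + L"
    by (metis a_def div_mult_mod_eq)
  with assms(2,3) have "j * Suc L < a * Suc L" "a * Suc L < (j + s) * Suc L"
    by linarith+
  then have "j < a" "a < j + s"
    using mult_less_cancel2 by blast+
  moreover have "a mod s = j mod s"
    using sep block_letter_at[of L L s a] by (simp add: p)
  ultimately show False
    using mod_neq_if_less_add by blast
qed

lemma map_block_letter_zeros:
  assumes "x + r \<le> L"
  shows "map (block_letter s L) [j * Suc L + x..<j * Suc L + x + r] = replicate r 0"
    (is "?xs = _")
proof (rule nth_equalityI)
  fix u assume "u < length ?xs"
  then have "u < r" by simp
  then have "block_letter s L (j * Suc L + (x + u)) = 0"
    using assms block_letter_at[of "x + u" L s j] by simp
  with \<open>u < r\<close> show "?xs ! u = replicate r 0 ! u"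
    by (simp add: add.assoc)
qed simp

lemma map_block_letter_run:
  assumes "r \<le> L"
  shows "map (block_letter s L) [j * Suc L + L..<j * Suc L + L + Suc r]
    = Suc (j mod s) # replicate r 0"
proof -
  have "[j * Suc L + L..<j * Suc L + L + Suc r]
      = (j * Suc L + L) # [Suc j * Suc L + 0..<Suc j * Suc L + 0 + r]"
    by (simp add: upt_conv_Cons ac_simps del: upt_Suc)
  then show ?thesis
    using map_block_letter_zeros[of 0 r L s "Suc j"] assms block_letter_at[of L L s j]
    by (simp add: ac_simps del: upt_Suc)
qed

lemma map_block_letter_window:
  fixes s L i d :: nat
  defines "j \<equiv> i div Suc L" and "r \<equiv> L - i mod Suc L"
  assumes "L < d"
  shows "i + r = j * Suc L + L"
    and "map (block_letter s L) [i..<i + d]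
      = replicate r 0 @ Suc (j mod s) # map (block_letter s L) [Suc (j * Suc L + L)..<i + d]"
proof -
  have i: "i = j * Suc L + i mod Suc L"
    unfolding j_def by (rule div_mult_mod_eq[symmetric])
  have "i mod Suc L \<le> L"
    by (simp add: less_Suc_eq_le)
  then show p0: "i + r = j * Suc L + L"
    using i unfolding r_def by linarith
  have "r < d"
    using assms(3) by (simp add: r_def)
  have "[i..<i + d] = [i..<i + r] @ (j * Suc L + L) # [Suc (j * Suc L + L)..<i + d]"
    unfolding p0[symmetric] using \<open>r < d\<close> by (intro upt_split_at) simp_all
  moreover have "map (block_letter s L) [i..<i + r] = replicate r 0"
    by (rule map_block_letter_zeros[of "i mod Suc L" r L s j, folded i]) (simp add: r_def)
  ultimately show "map (block_letter s L) [i..<i + d]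
      = replicate r 0 @ Suc (j mod s) # map (block_letter s L) [Suc (j * Suc L + L)..<i + d]"
    using block_letter_at[of L L s j] by simp
qed

lemma block_window_witness:
  fixes s d i n t :: nat
  defines "L \<equiv> d div s"
  defines "T \<equiv> map (block_letter s L) [0..<n]"
    and "j \<equiv> i div Suc L" and "r \<equiv> L - i mod Suc L"
  assumes s: "2 \<le> s" and d: "0 < d" and i: "Suc i + d \<le> n"
    and t: "1 \<le> t" "(t + 2) * Suc L \<le> d + 1"
  shows "Suc ((j + t) mod s) # replicate r 0 @ [Suc (j mod s)]
    \<in> MAW {0..<Suc s} (window T i d) - MAW {0..<Suc s} (window T (Suc i) d)"
proof -
  let ?f = "block_letter s L" and ?P = "Suc L"
  define c where "c = Suc (j mod s)"
  define V where "V = map ?f [Suc (j * ?P + L)..<i + d]"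
  have "L < d"
    using s d by (simp add: L_def)
  have "d < s * ?P"
  proof -
    have "d mod s < s"
      using s by simp
    then show ?thesis
      using mult_div_mod_eq[of s d] unfolding L_def mult_Suc_right by linarith
  qed
  have p0: "i + r = j * ?P + L"
    and W: "map ?f [i..<i + d] = replicate r 0 @ c # V"
    using map_block_letter_window(1)[where L = L and d = d and i = i]
      map_block_letter_window(2)[where L = L and d = d and i = i and s = s] \<open>L < d\<close>
    by (simp_all add: j_def r_def c_def V_def)
  have W': "map ?f [Suc i..<Suc i + d] = tl (map ?f [i..<i + d]) @ [?f (i + d)]"
    using d by (simp add: map_tl[symmetric] upt_conv_Cons)
  have no_c: "?f p \<noteq> c" if "j * ?P + L < p" "p \<le> i + d" for p
    using that block_letter_sep_unique[of s j L p] s p0 \<open>d < s * ?P\<close>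
    by (simp add: c_def algebra_simps)
  have "c \<notin> set V"
  proof
    assume "c \<in> set V"
    then obtain p where "j * ?P + L < p" "p < i + d" "?f p = c"
      by (auto simp: V_def Suc_le_eq)
    with no_c show False by simp
  qed
  have "r \<le> L" "r < d"
    using \<open>L < d\<close> by (simp_all add: r_def)
  then have "c \<noteq> ?f (i + d)"
    using no_c[of "i + d"] p0 by simp
  have "(j + t) * ?P + L + Suc r \<le> i + d"
    using t(2) p0 by (simp add: r_def algebra_simps)
  moreover have "Suc (j * ?P + L) \<le> (j + t) * ?P + L"
    using t(1) by (simp add: algebra_simps)
  ultimately have "sublist (map ?f [(j + t) * ?P + L..<(j + t) * ?P + L + Suc r]) V"
    unfolding V_def by (intro sublist_map_upt) simp_all
  then have "sublist (Suc ((j + t) mod s) # replicate r 0) V"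
    by (simp only: map_block_letter_run[OF \<open>r \<le> L\<close>])
  moreover have "Suc ((j + t) mod s) \<in> {0..<Suc s}" "c \<in> {0..<Suc s}"
    using s by (simp_all add: c_def)
  moreover have "window T i d = map ?f [i..<i + d]" "window T (Suc i) d = map ?f [Suc i..<Suc i + d]"
    using i by (simp_all add: T_def window_map_upt)
  ultimately show ?thesis
    using MAW_diff_witness[OF W \<open>c \<notin> set V\<close> \<open>c \<noteq> ?f (i + d)\<close>] W' by (simp add: c_def)
qed

lemma card_symdiff_MAW_blocks:
  fixes s d i n :: nat
  defines "L \<equiv> d div s"
  defines "T \<equiv> map (block_letter s L) [0..<n]"
  assumes s: "2 \<le> s" and d: "0 < d" and i: "Suc i + d \<le> n"
  shows "min (s - 1) ((d + 1) div Suc L - 2)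
    \<le> card (symdiff (MAW {0..<Suc s} (window T i d)) (MAW {0..<Suc s} (window T (Suc i) d)))"
proof -
  let ?M = "MAW {0..<Suc s}"
  define K where "K = min (s - 1) ((d + 1) div Suc L - 2)"
  define j where "j = i div Suc L"
  define w where "w t = Suc ((j + t) mod s) # replicate (L - i mod Suc L) 0 @ [Suc (j mod s)]" for t
  have w_mem: "w t \<in> ?M (window T i d) - ?M (window T (Suc i) d)"
    if "1 \<le> t" "t \<le> K" for t
  proof -
    have "t + 2 \<le> (d + 1) div Suc L"
      using that by (simp add: K_def) linarith
    then have "(t + 2) * Suc L \<le> d + 1"
      using div_times_less_eq_dividend le_trans mult_le_mono1 by blast
    with block_window_witness[OF s d i that(1)] show ?thesis
      by (simp add: w_def j_def L_def T_def)
  qed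
  have "inj_on w {1..K}"
  proof (rule inj_onI)
    fix t t' assume "t \<in> {1..K}" "t' \<in> {1..K}" "w t = w t'"
    then have "(j + t) mod s = (j + t') mod s" "t < t' + s" "t' < t + s"
      by (auto simp: w_def K_def)
    then show "t = t'"
      using mod_neq_if_less_add[of "j + t" "j + t'" s] mod_neq_if_less_add[of "j + t'" "j + t" s]
      by (metis add_less_cancel_left add.assoc linorder_neqE_nat)
  qed
  then have "K = card (w ` {1..K})"
    by (simp add: card_image)
  also have "\<dots> \<le> card (symdiff (?M (window T i d)) (?M (window T (Suc i) d)))"
    using w_mem by (intro card_le_card_symdiff finite_MAW) auto
  finally show ?thesis
    by (simp add: K_def)
qed

lemma min_le_block_witnesses:
  fixes s d :: nat
  assumes "2 \<le> s" "0 < d"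
  shows "min d (Suc s) \<le> 2 * min (s - 1) ((d + 1) div Suc (d div s) - 2) + 6"
proof (cases "d < s")
  case True
  then show ?thesis by simp
next
  case False
  define P where "P = Suc (d div s)"
  define Q where "Q = (d + 1) div P"
  have "(d + 1) mod P < P"
    by (simp add: P_def)
  moreover have "Q * P + (d + 1) mod P = d + 1"
    unfolding Q_def by (rule div_mult_mod_eq)
  ultimately have "d + 1 < (Q + 1) * P"
    unfolding distrib_right by linarith
  have "s * P \<le> d + s"
    using times_div_less_eq_dividend[of s d] by (simp add: P_def)
  have "s * d < s * (d + 1)"
    using assms(1) by simp
  also have "\<dots> < s * ((Q + 1) * P)"
    using \<open>d + 1 < (Q + 1) * P\<close> assms(1) by (intro mult_strict_left_mono) simp_all
  also have "\<dots> = (Q + 1) * (s * P)"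
    by (simp add: algebra_simps)
  also have "\<dots> \<le> (Q + 1) * (d + d)"
    using \<open>s * P \<le> d + s\<close> False by (intro mult_le_mono2) simp
  also have "\<dots> = (2 * (Q + 1)) * d"
    by simp
  finally have "s < 2 * (Q + 1)"
    by (rule mult_less_cancel2[THEN iffD1, THEN conjunct2])
  then have "Suc s \<le> 2 * min (s - 1) (Q - 2) + 6"
    by (cases "s - 1 \<le> Q - 2") (simp_all add: min_def)
  then show ?thesis
    unfolding P_def[symmetric] Q_def[symmetric] using min.cobounded2[of d "Suc s"] by linarith
qed

lemma Ssum_lower_bound:
  assumes "2 \<le> \<sigma>" "d < n"
  shows "\<exists>T. length T = n \<and> set T \<subseteq> {0..<\<sigma>} \<and>
    min d \<sigma> * (n - d) \<le> 12 * Ssum {0..<\<sigma>} T d"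
proof -
  consider "d = 0" | "0 < d" "min d \<sigma> < 12" | "0 < d" "12 \<le> min d \<sigma>"
    by linarith
  then show ?thesis
  proof cases
    case 1
    then show ?thesis
      by (intro exI[of _ "replicate n 0"]) (use assms(1) in auto)
  next
    case 2
    let ?T = "map (\<lambda>p. p mod 2) [0..<n]"
    have "(n - d) * 1 \<le> Ssum {0..<\<sigma>} ?T d"
      using Ssum_ge_if_steps_ge[of d ?T 1] card_symdiff_MAW_alternating[OF assms(1) 2(1)] by simp
    then have "min d \<sigma> * (n - d) \<le> 12 * Ssum {0..<\<sigma>} ?T d"
      using mult_le_mono1[of "min d \<sigma>" 12 "n - d"] 2(2) by linarith
    moreover have "set ?T \<subseteq> {0..<\<sigma>}"
      using assms(1) by auto
    ultimately show ?thesis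
      by (intro exI[of _ ?T]) auto
  next
    case 3
    define s where "s = \<sigma> - 1"
    define K where "K = min (s - 1) ((d + 1) div Suc (d div s) - 2)"
    let ?T = "map (block_letter s (d div s)) [0..<n]"
    have s: "2 \<le> s" "\<sigma> = Suc s"
      using 3(2) assms(1) by (auto simp: s_def)
    have steps: "(n - d) * K \<le> Ssum {0..<\<sigma>} ?T d"
      using Ssum_ge_if_steps_ge[of d ?T K] card_symdiff_MAW_blocks[OF s(1) 3(1)]
      by (simp add: K_def s(2))
    have "min d \<sigma> \<le> 4 * K"
      using min_le_block_witnesses[OF s(1) 3(1)] 3(2) unfolding K_def s(2) by linarith
    then have "min d \<sigma> * (n - d) \<le> 12 * ((n - d) * K)"
      using mult_le_mono1[of "min d \<sigma>" "4 * K" "n - d"] by simp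
    also have "\<dots> \<le> 12 * Ssum {0..<\<sigma>} ?T d"
      using steps by simp
    finally have "min d \<sigma> * (n - d) \<le> 12 * Ssum {0..<\<sigma>} ?T d" .
    moreover have "set ?T \<subseteq> {0..<\<sigma>}"
      using block_letter_less s by auto
    ultimately show ?thesis
      by (intro exI[of _ ?T]) auto
  qed
qed

lemma Ssum_lower_bound_scaled:
  fixes \<gamma> :: real
  assumes "2 \<le> \<sigma>" "d < n" "\<gamma> * real n \<le> real (n - d)"
  shows "\<exists>T. length T = n \<and> set T \<subseteq> {0..<\<sigma>} \<and>
    \<gamma> / 12 * real (min d \<sigma>) * real n \<le> real (Ssum {0..<\<sigma>} T d)"
proof -
  obtain T where T: "length T = n" "set T \<subseteq> {0..<\<sigma>}"
    "min d \<sigma> * (n - d) \<le> 12 * Ssum {0..<\<sigma>} T d"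
    using Ssum_lower_bound[OF assms(1,2)] by blast
  have "\<gamma> / 12 * real (min d \<sigma>) * real n = real (min d \<sigma>) * (\<gamma> * real n) / 12"
    by simp
  also have "\<dots> \<le> real (min d \<sigma>) * real (n - d) / 12"
    using assms(3) by (intro divide_right_mono mult_left_mono) auto
  also have "\<dots> \<le> real (Ssum {0..<\<sigma>} T d)"
    using T(3) by (simp flip: of_nat_mult)
  finally show ?thesis
    using T(1,2) by blast
qed

theorem theorem4:
  shows "(\<exists>C::real>0. \<forall>(\<Sigma>::nat set) (d::nat) (T::nat list).
            finite \<Sigma> \<and> card \<Sigma> \<ge> 2 \<and> 0 < d \<and> set T \<subseteq> \<Sigma> \<and> d < length T \<longrightarrow>
            real (Ssum \<Sigma> T d) \<le> C * real (min d (card \<Sigma>)) * real (length T))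
       \<and> (\<forall>\<gamma>::real. 0 < \<gamma> \<and> \<gamma> < 1 \<longrightarrow>
            (\<exists>c::real>0. \<forall>(\<sigma>::nat) (d::nat) (n::nat).
               2 \<le> \<sigma> \<and> d < n \<and> \<gamma> * real n \<le> real (n - d) \<longrightarrow>
               (\<exists>T::nat list. length T = n \<and> set T \<subseteq> {0..<\<sigma>} \<and>
                  c * real (min d \<sigma>) * real n \<le> real (Ssum {0..<\<sigma>} T d))))"
proof (intro conjI allI impI)
  have "real (Ssum \<Sigma> T d) \<le> 8 * real (min d (card \<Sigma>)) * real (length T)"
    if "finite \<Sigma> \<and> card \<Sigma> \<ge> 2 \<and> 0 < d \<and> set T \<subseteq> \<Sigma> \<and> d < length T"
    for \<Sigma> :: "nat set" and d and T :: "nat list"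
    using Ssum_le[of \<Sigma> T d] that by (metis of_nat_le_iff of_nat_mult of_nat_numeral)
  then show "\<exists>C::real>0. \<forall>(\<Sigma>::nat set) (d::nat) (T::nat list).
      finite \<Sigma> \<and> card \<Sigma> \<ge> 2 \<and> 0 < d \<and> set T \<subseteq> \<Sigma> \<and> d < length T \<longrightarrow>
      real (Ssum \<Sigma> T d) \<le> C * real (min d (card \<Sigma>)) * real (length T)"
    by (intro exI[of _ 8]) auto
next
  fix \<gamma> :: real
  assume "0 < \<gamma> \<and> \<gamma> < 1"
  then show "\<exists>c::real>0. \<forall>(\<sigma>::nat) (d::nat) (n::nat).
      2 \<le> \<sigma> \<and> d < n \<and> \<gamma> * real n \<le> real (n - d) \<longrightarrow>
      (\<exists>T::nat list. length T = n \<and> set T \<subseteq> {0..<\<sigma>} \<and>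
         c * real (min d \<sigma>) * real n \<le> real (Ssum {0..<\<sigma>} T d))"
    using Ssum_lower_bound_scaled by (intro exI[of _ "\<gamma> / 12"]) auto
qed

end
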